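(* Let $R$ be a compact Hausdorff topological semiring and let $A$ be a closed ideal of $R$. Then the relation $\kappa_A=\{(x,y)\in R\times R\mid \exists a,b\in A:\ x+a=y+b\}$ is closed in $R\times R$.
   Context: A semiring is an algebra $(R,+,\cdot,0)$ such that $(R,+,0)$ is a commutative monoid, $(R,\cdot)$ is a semigroup (no multiplicative identity is required), multiplication distributes over addition on both sides, and $0\cdot x = x\cdot 0 = 0$ for all $x\in R$. A topological semiring is a semiring with a topology in which addition and multiplication are continuous. An ideal of $R$ is a submonoid $A$ of $(R,+,0)$ with $RA\cup AR\subseteq A$. *)

theory Defs
  imports "HOL-Analysis.Analysis"
begin

definition topological_semiring :: "('a::{semiring_0, topological_space}) itself \<Rightarrow> bool" where
  "topological_semiring _ \<longleftrightarrow>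
     continuous_on UNIV (\<lambda>p::'a \<times> 'a. fst p + snd p) \<and>
     continuous_on UNIV (\<lambda>p::'a \<times> 'a. fst p * snd p)"

definition semiring_ideal :: "('a::semiring_0) set \<Rightarrow> bool" where
  "semiring_ideal A \<longleftrightarrow>
     0 \<in> A \<and> (\<forall>a\<in>A. \<forall>b\<in>A. a + b \<in> A) \<and>
     (\<forall>r a. a \<in> A \<longrightarrow> r * a \<in> A \<and> a * r \<in> A)"

definition kappa :: "('a::semiring_0) set \<Rightarrow> ('a \<times> 'a) set" where
  "kappa A = {(x, y). \<exists>a\<in>A. \<exists>b\<in>A. x + a = y + b}"

end

theory Submission
  imports Defs
begin

text \<open>\<open>\<kappa>\<^sub>A\<close> is the projection to \<open>R \<times> R\<close> of the closed set of quadruples \<open>(x, y, a, b)\<close>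
with \<open>a, b \<in> A\<close> and \<open>x + a = y + b\<close>. In a compact space this set is compact, so its image
under the continuous projection is compact, hence closed in the Hausdorff space \<open>R \<times> R\<close>.\<close>

lemma continuous_on_add_of_continuous_addition:
  fixes f g :: "'b::topological_space \<Rightarrow> 'a::{plus, topological_space}"
  assumes "continuous_on UNIV (\<lambda>p::'a \<times> 'a. fst p + snd p)"
    and "continuous_on S f" and "continuous_on S g"
  shows "continuous_on S (\<lambda>x. f x + g x)"
proof -
  have "continuous_on S (\<lambda>x. (f x, g x))"
    using assms(2,3) by (rule continuous_on_Pair)
  from continuous_on_compose[OF this continuous_on_subset[OF assms(1)]]
  show ?thesis by (simp add: o_def)
qed

lemma kappa_eq_fst_image:
  "kappa A = fst ` {(p, q). q \<in> A \<times> A \<and> fst p + fst q = snd p + snd q}"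
  unfolding kappa_def by (auto simp: image_iff; force)

lemma closed_kappa_if_compact:
  fixes A :: "('a::{semiring_0, t2_space}) set"
  assumes add: "continuous_on UNIV (\<lambda>p::'a \<times> 'a. fst p + snd p)"
    and "compact (UNIV :: 'a set)"
    and "closed A"
  shows "closed (kappa A)"
proof -
  define S :: "(('a \<times> 'a) \<times> ('a \<times> 'a)) set"
    where "S = {(p, q). q \<in> A \<times> A \<and> fst p + fst q = snd p + snd q}"
  have "S = {z. fst (fst z) + fst (snd z) = snd (fst z) + snd (snd z)} \<inter> UNIV \<times> (A \<times> A)"
    unfolding S_def by auto
  also have "closed \<dots>"
    using \<open>closed A\<close>
    by (intro closed_Int closed_Times closed_Collect_eq
        continuous_on_add_of_continuous_addition[OF add] continuous_intros) auto
  finally have "closed S" .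
  moreover have "compact (UNIV :: (('a \<times> 'a) \<times> ('a \<times> 'a)) set)"
    using \<open>compact UNIV\<close> by (metis UNIV_Times_UNIV compact_Times)
  ultimately have "compact S"
    using closed_Int_compact by fastforce
  then have "compact (fst ` S)"
    by (intro compact_continuous_image continuous_intros)
  then show ?thesis
    unfolding kappa_eq_fst_image S_def by (rule compact_imp_closed)
qed

theorem lemma3p2:
  fixes A :: "('a::{semiring_0, t2_space}) set"
  assumes "topological_semiring TYPE('a)"
    and "compact (UNIV :: 'a set)"
    and "semiring_ideal A"
    and "closed A"
  shows "closed (kappa A)"
  using assms(1,2,4) unfolding topological_semiring_def
  by (blast intro: closed_kappa_if_compact)

end
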